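(* Let $A$ be a CFG-ring and $n,m\ge1$. A map $f:A^{n}\to A^{m}$ is contractive (i.e. $d(f(x),f(y))\le d(x,y)$ for all $x,y\in A^n$) if and only if there exist polynomials $f_1,\dots,f_m\in A[X_1,\dots,X_n]$ with $f(x)=(f_1(x),\dots,f_m(x))$ for all $x\in A^n$.
   Context: All rings are commutative with identity. A regular ring is a commutative von Neumann regular ring. For a regular ring $A$, $B(A)$ is the Boolean ring of idempotents of $A$ (product from $A$, sum $a\tilde+b=(a-b)^2$, $a\vee b=a+b-ab$, $a\le b\iff ab=a$), and $e(a)$ is the unique idempotent with $aA=e(a)A$. On $A^k$ the metric is $d((x_i),(y_i))=e(x_1-y_1)\vee\cdots\vee e(x_k-y_k)\in B(A)$. A Boolean metric space over a Boolean ring $B$: a set $X$ with $d:X\times X\to B$ satisfying $d(x,y)=0\iff x=y$, symmetry, and $d(x,z)\le d(x,y)\vee d(y,z)$. For $x_1,\dots,x_k\in X$, $a_1,\dots,a_k\in B$ pairwise disjoint with sum $1$, $x$ is a convex combination of the $x_i$ with coefficients $a_i$ if $a_id(x,x_i)=0$ for all $i$. $X$ is a CFG-space if all such convex combinations exist in $X$ and every element of $X$ is a convex combination of elements of some fixed finite subset of $X$. A CFG-ring is a regular ring $A$ such that $A$ with metric $d(x,y)=e(x-y)$ is a CFG-space over $B(A)$. *)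

theory Defs
  imports Main "HOL-Library.Poly_Mapping"
begin

definition regular_ring :: "'a::comm_ring_1 itself \<Rightarrow> bool" where
  "regular_ring _ \<longleftrightarrow> (\<forall>a::'a. \<exists>x. a * x * a = a)"

definition is_idem :: "'a::comm_ring_1 \<Rightarrow> bool" where
  "is_idem e \<longleftrightarrow> e * e = e"

definition ble :: "'a::comm_ring_1 \<Rightarrow> 'a \<Rightarrow> bool" where
  "ble a b \<longleftrightarrow> a * b = a"

definition bjoin :: "'a::comm_ring_1 \<Rightarrow> 'a \<Rightarrow> 'a" where
  "bjoin a b = a + b - a * b"

definition eid :: "'a::comm_ring_1 \<Rightarrow> 'a" where
  "eid a = (THE e. e * e = e \<and> range (\<lambda>x. a * x) = range (\<lambda>x. e * x))"

text \<open>Elements of A^k are represented as functions nat \<Rightarrow> A vanishing from index k on.\<close>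
definition vecs :: "nat \<Rightarrow> (nat \<Rightarrow> 'a::comm_ring_1) set" where
  "vecs k = {x. \<forall>i\<ge>k. x i = 0}"

definition vdist :: "nat \<Rightarrow> (nat \<Rightarrow> 'a::comm_ring_1) \<Rightarrow> (nat \<Rightarrow> 'a) \<Rightarrow> 'a" where
  "vdist k x y = foldr bjoin (map (\<lambda>i. eid (x i - y i)) [0..<k]) 0"

definition contractive :: "nat \<Rightarrow> nat \<Rightarrow> ((nat \<Rightarrow> 'a::comm_ring_1) \<Rightarrow> (nat \<Rightarrow> 'a)) \<Rightarrow> bool" where
  "contractive n m f \<longleftrightarrow> (\<forall>x\<in>vecs n. \<forall>y\<in>vecs n. ble (vdist m (f x) (f y)) (vdist n x y))"

text \<open>Coefficients: idempotents, pairwise disjoint, with sum 1 (for pairwise disjoint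
  idempotents the Boolean-ring sum coincides with the ring sum).\<close>
definition coeff_family :: "'a::comm_ring_1 list \<Rightarrow> bool" where
  "coeff_family as \<longleftrightarrow> (\<forall>i<length as. is_idem (as ! i))
     \<and> (\<forall>i<length as. \<forall>j<length as. i \<noteq> j \<longrightarrow> as ! i * as ! j = 0)
     \<and> sum_list as = 1"

text \<open>x is a convex combination of xs with coefficients as (metric d(x,y) = e(x-y)).\<close>
definition convex_comb :: "'a::comm_ring_1 \<Rightarrow> 'a list \<Rightarrow> 'a list \<Rightarrow> bool" where
  "convex_comb x xs as \<longleftrightarrow> length xs = length as \<and> coeff_family as
     \<and> (\<forall>i<length as. as ! i * eid (x - xs ! i) = 0)"

definition CFG_ring :: "'a::comm_ring_1 itself \<Rightarrow> bool" where
  "CFG_ring T \<longleftrightarrow> regular_ring T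
     \<and> (\<forall>(xs::'a list) as. length xs = length as \<and> coeff_family as \<longrightarrow> (\<exists>x. convex_comb x xs as))
     \<and> (\<exists>F::'a set. finite F \<and> (\<forall>x. \<exists>xs as. set xs \<subseteq> F \<and> convex_comb x xs as))"

type_synonym monomial = "(nat, nat) poly_mapping"
type_synonym 'a mpoly = "(monomial, 'a) poly_mapping"


text \<open>A polynomial in A[X_0,...,X_{n-1}]: finitely supported map from monomials
  (finitely supported exponent vectors) to coefficients.\<close>
definition mpoly_in_vars :: "nat \<Rightarrow> 'a::comm_ring_1 mpoly \<Rightarrow> bool" where
  "mpoly_in_vars n p \<longleftrightarrow> (\<forall>mn::monomial. mn \<in> Poly_Mapping.keys p \<longrightarrow> Poly_Mapping.keys mn \<subseteq> {..<n})"

definition mpoly_eval :: "'a::comm_ring_1 mpoly \<Rightarrow> (nat \<Rightarrow> 'a) \<Rightarrow> 'a" where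
  "mpoly_eval p x = (\<Sum>mn \<in> Poly_Mapping.keys p. Poly_Mapping.lookup p mn * (\<Prod>i \<in> Poly_Mapping.keys mn. x i ^ Poly_Mapping.lookup mn i))"

end

theory Submission
  imports Defs "HOL-Library.FuncSet"
begin

(* Write D(x,y) = vdist for the Boolean distance.  In a regular ring an
   element u annihilates D(x,y) iff it annihilates every coordinate difference x_i - y_i,
   and D(x,y) is idempotent.  Hence a map f is contractive iff it is "local": every u
   annihilating x - y also annihilates f x - f y (lemma contractive_iff_local).

   Polynomial maps are local because u*a = u*b is a congruence for + and *.

   Conversely, let F be the finite generating set of the CFG-ring.  Every element is
   piecewise (along a partition of unity into idempotent pieces) equal to an element of F;
   from this, y^N is idempotent for N = (card F)!, so 1 - y^N annihilates y.  The
   polynomial delta_c(x) = prod_i (1 - (x_i - c_i)^N) then annihilates x - c, while the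
   elements 1 - delta_c(x), c ranging over the finite grid F^n, have product zero.  A
   local f therefore agrees with an explicit Boolean interpolation of its values on the
   grid, which is a polynomial (lemma local_map_polynomial). *)

lemma annihilator_mult:
  fixes u a b :: "'a::comm_ring_1"
  assumes "u * a = 0"
  shows "u * (a * b) = 0" and "u * (b * a) = 0" and "u * b * a = 0"
proof -
  show "u * (a * b) = 0" using assms by (simp add: mult.assoc[symmetric])
  show "u * (b * a) = 0" using assms by (simp add: mult.left_commute)
  have "u * b * a = b * (u * a)" by (simp add: ac_simps)
  then show "u * b * a = 0" using assms by simp
qed

lemma mult_cong_mod:
  fixes e a b c d :: "'a::comm_ring_1"
  assumes "e * a = e * b" "e * c = e * d"
  shows "e * (a * c) = e * (b * d)"
proof -
  have "e * (a * c) = c * (e * a)" by (simp add: ac_simps)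
  also have "\<dots> = b * (e * c)" using assms(1) by (simp add: ac_simps)
  also have "\<dots> = e * (b * d)" using assms(2) by (simp add: ac_simps)
  finally show ?thesis .
qed

lemma power_cong_mod:
  fixes e a b :: "'a::comm_ring_1"
  assumes "e * a = e * b"
  shows "e * a ^ k = e * b ^ k"
proof (induction k)
  case (Suc k)
  show ?case using mult_cong_mod[OF assms Suc.IH] by simp
qed simp

lemma prod_cong_mod:
  fixes e :: "'a::comm_ring_1"
  assumes "\<And>i. i \<in> S \<Longrightarrow> e * a i = e * b i"
  shows "e * prod a S = e * prod b S"
  using assms
proof (induction S rule: infinite_finite_induct)
  case (insert x S)
  have "e * (a x * prod a S) = e * (b x * prod b S)"
    by (rule mult_cong_mod) (use insert in auto)
  then show ?case using insert(1,2) by simp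
qed simp_all

text \<open>An idempotent e with e*z = z and e \<in> zA generates zA, hence is e(z).\<close>
lemma eid_unique:
  fixes z e :: "'a::comm_ring_1"
  assumes idem: "e * e = e" and ez: "e * z = z" and et: "e = z * t"
  shows "eid z = e"
  unfolding eid_def
proof (rule the_equality)
  have "range (\<lambda>x. z * x) = range (\<lambda>x. e * x)"
  proof (intro set_eqI iffI)
    fix a assume "a \<in> range (\<lambda>x. z * x)"
    then obtain x where "a = z * x" by auto
    then have "a = e * (z * x)" using ez by (simp add: mult.assoc[symmetric])
    then show "a \<in> range (\<lambda>x. e * x)" by blast
  next
    fix a assume "a \<in> range (\<lambda>x. e * x)"
    then obtain x where "a = e * x" by auto
    then have "a = z * (t * x)" using et by (simp add: mult.assoc)
    then show "a \<in> range (\<lambda>x. z * x)" by blast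
  qed
  then show "e * e = e \<and> range (\<lambda>x. z * x) = range (\<lambda>x. e * x)" using idem by simp
next
  fix e' assume e': "e' * e' = e' \<and> range (\<lambda>x. z * x) = range (\<lambda>x. e' * x)"
  have "e' \<in> range (\<lambda>x. e' * x)" by (rule range_eqI[of _ _ 1]) simp
  then obtain s where s: "e' = z * s" using e' by auto
  have "z \<in> range (\<lambda>x. z * x)" by (rule range_eqI[of _ _ 1]) simp
  then obtain r where r: "z = e' * r" using e' by auto
  have "e' * z = z" using e' by (simp add: r mult.assoc[symmetric])
  then have "e' * e = e" using et by (simp add: mult.assoc[symmetric])
  moreover have "e * e' = e'" using s ez by (simp add: mult.assoc[symmetric])
  ultimately show "e' = e" by (simp add: mult.commute)
qed

lemma eid_props:
  fixes z :: "'a::comm_ring_1"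
  assumes reg: "regular_ring TYPE('a)"
  shows "eid z * eid z = eid z \<and> z * eid z = z \<and> (\<exists>t. eid z = z * t)"
proof -
  obtain w where w: "z * w * z = z" using reg unfolding regular_ring_def by blast
  have idem: "(z * w) * (z * w) = z * w" using w by (metis mult.assoc)
  have "(z * w) * z = z" using w by simp
  then have "eid z = z * w" by (intro eid_unique[OF idem]) auto
  then show ?thesis using idem w by (auto simp: mult.commute)
qed

lemma eid_annihilator:
  fixes z u :: "'a::comm_ring_1"
  assumes reg: "regular_ring TYPE('a)"
  shows "u * eid z = 0 \<longleftrightarrow> u * z = 0"
proof -
  obtain t where t: "eid z = z * t" and zz: "z * eid z = z" using eid_props[OF reg, of z] by blast
  show ?thesis
  proof
    assume "u * eid z = 0"
    then have "u * (z * eid z) = 0" by (rule annihilator_mult(2))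
    then show "u * z = 0" using zz by simp
  next
    assume "u * z = 0" then show "u * eid z = 0" using t annihilator_mult(1) by simp
  qed
qed

lemma bjoin_idem:
  fixes a b :: "'a::comm_ring_1"
  assumes "a * a = a" "b * b = b"
  shows "bjoin a b * bjoin a b = bjoin a b"
proof -
  have "bjoin a b * bjoin a b = a * a + b * b + (a * a) * (b * b) + 2 * a * b - 2 * (a * a) * b - 2 * a * (b * b)"
    by (simp add: bjoin_def algebra_simps)
  then show ?thesis using assms by (simp add: bjoin_def algebra_simps)
qed

lemma foldr_bjoin_idem:
  "(\<forall>a\<in>set L. a * a = a) \<Longrightarrow> foldr bjoin L 0 * foldr bjoin L 0 = (foldr bjoin L 0 :: 'a::comm_ring_1)"
  by (induction L) (simp_all add: bjoin_idem)

lemma foldr_bjoin_upper: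
  fixes a :: "'a::comm_ring_1"
  assumes "a \<in> set L" "a * a = a"
  shows "ble a (foldr bjoin L 0)"
  using assms(1) unfolding ble_def
proof (induction L)
  case (Cons b L)
  define J where "J = foldr bjoin L (0::'a)"
  show ?case
  proof (cases "a = b")
    case True
    have "b * bjoin b J = b * b + b * J - (b * b) * J" by (simp add: bjoin_def algebra_simps)
    then show ?thesis using True assms(2) by (simp add: J_def)
  next
    case False
    then have aJ: "a * J = a" using Cons by (simp add: J_def)
    have "a * bjoin b J = a * b + a * J - (a * J) * b" by (simp add: bjoin_def algebra_simps)
    then show ?thesis using aJ by (simp add: J_def)
  qed
qed simp

lemma foldr_bjoin_annihilator:
  fixes u :: "'a::comm_ring_1"
  assumes idem: "\<forall>a\<in>set L. a * a = a"
  shows "u * foldr bjoin L 0 = 0 \<longleftrightarrow> (\<forall>a\<in>set L. u * a = 0)"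
proof
  assume u: "u * foldr bjoin L 0 = 0"
  show "\<forall>a\<in>set L. u * a = 0"
  proof
    fix a assume a: "a \<in> set L"
    then have "a = a * foldr bjoin L 0" using foldr_bjoin_upper idem unfolding ble_def by metis
    then show "u * a = 0" using annihilator_mult(2)[OF u, of a] by simp
  qed
next
  show "\<forall>a\<in>set L. u * a = 0 \<Longrightarrow> u * foldr bjoin L 0 = 0"
    by (induction L) (auto simp: bjoin_def algebra_simps)
qed

lemma vdist_idem:
  fixes x y :: "nat \<Rightarrow> 'a::comm_ring_1"
  assumes reg: "regular_ring TYPE('a)"
  shows "vdist k x y * vdist k x y = vdist k x y"
  unfolding vdist_def by (rule foldr_bjoin_idem) (use eid_props[OF reg] in auto)

lemma vdist_annihilator:
  fixes u :: "'a::comm_ring_1"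
  assumes reg: "regular_ring TYPE('a)"
  shows "u * vdist k x y = 0 \<longleftrightarrow> (\<forall>i<k. u * (x i - y i) = 0)"
proof -
  have "u * vdist k x y = 0 \<longleftrightarrow> (\<forall>i<k. u * eid (x i - y i) = 0)"
    unfolding vdist_def by (subst foldr_bjoin_annihilator) (use eid_props[OF reg] in auto)
  then show ?thesis using eid_annihilator[OF reg] by simp
qed

section \<open>Contractive maps are exactly the local maps\<close>

text \<open>f is local if it preserves annihilation of differences: whatever kills x - y kills
  f x - f y.  Equivalently f commutes with restriction to every component eA.\<close>
definition local_map :: "nat \<Rightarrow> nat \<Rightarrow> ((nat \<Rightarrow> 'a::comm_ring_1) \<Rightarrow> (nat \<Rightarrow> 'a)) \<Rightarrow> bool" where
  "local_map n m f \<longleftrightarrow> (\<forall>x\<in>vecs n. \<forall>y\<in>vecs n. \<forall>u.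
     (\<forall>i<n. u * (x i - y i) = 0) \<longrightarrow> (\<forall>j<m. u * (f x j - f y j) = 0))"

lemma local_mapD:
  assumes "local_map n m f" "x \<in> vecs n" "y \<in> vecs n" "\<And>i. i < n \<Longrightarrow> u * (x i - y i) = 0" "j < m"
  shows "u * (f x j - f y j) = 0"
  using assms unfolding local_map_def by blast

text \<open>In a regular ring contractivity is locality: apply the annihilator description of
  the distance, using the complementary idempotent 1 - D(x,y) for the converse.\<close>
lemma contractive_iff_local:
  fixes f :: "(nat \<Rightarrow> 'a::comm_ring_1) \<Rightarrow> (nat \<Rightarrow> 'a)"
  assumes reg: "regular_ring TYPE('a)"
  shows "contractive n m f \<longleftrightarrow> local_map n m f"
proof
  assume c: "contractive n m f"
  show "local_map n m f" unfolding local_map_def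
  proof (intro ballI allI impI)
    fix x y u j
    assume x: "x \<in> vecs n" and y: "y \<in> vecs n" and u: "\<forall>i<n. u * (x i - y i) = (0::'a)" and j: "j < m"
    let ?D = "vdist n x y" and ?D' = "vdist m (f x) (f y)"
    have "u * ?D = 0" using u vdist_annihilator[OF reg] by blast
    then have "u * (?D' * ?D) = 0" by (rule annihilator_mult(2))
    moreover have "?D' * ?D = ?D'" using c x y unfolding contractive_def ble_def by blast
    ultimately have "u * ?D' = 0" by simp
    then show "u * (f x j - f y j) = 0" using vdist_annihilator[OF reg] j by blast
  qed
next
  assume l: "local_map n m f"
  show "contractive n m f" unfolding contractive_def ble_def
  proof (intro ballI)
    fix x y :: "nat \<Rightarrow> 'a" assume x: "x \<in> vecs n" and y: "y \<in> vecs n"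
    let ?D = "vdist n x y" and ?D' = "vdist m (f x) (f y)"
    have "(1 - ?D) * ?D = ?D - ?D * ?D" by (simp add: left_diff_distrib)
    then have "(1 - ?D) * ?D = 0" using vdist_idem[OF reg] by simp
    then have "\<forall>i<n. (1 - ?D) * (x i - y i) = 0" using vdist_annihilator[OF reg] by blast
    then have "\<forall>j<m. (1 - ?D) * (f x j - f y j) = 0" using l x y unfolding local_map_def by blast
    then have "(1 - ?D) * ?D' = 0" using vdist_annihilator[OF reg] by blast
    then show "?D' * ?D = ?D'" by (simp add: algebra_simps)
  qed
qed

section \<open>Evaluation of multivariate polynomials\<close>

definition mon :: "monomial \<Rightarrow> (nat \<Rightarrow> 'a::comm_ring_1) \<Rightarrow> 'a" where
  "mon mn x = (\<Prod>i\<in>Poly_Mapping.keys mn. x i ^ Poly_Mapping.lookup mn i)"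

text \<open>Products and sums defining the evaluation may be taken over any finite superset of
  the support; this lets two polynomials be evaluated over a common index set.\<close>
lemma mon_superset:
  assumes "finite S" "Poly_Mapping.keys mn \<subseteq> S"
  shows "mon mn x = (\<Prod>i\<in>S. x i ^ Poly_Mapping.lookup mn i)"
  unfolding mon_def
  by (rule prod.mono_neutral_left) (use assms in \<open>auto simp: in_keys_iff\<close>)

lemma mon_add: "mon (a + b) x = mon a x * mon b x"
proof -
  let ?S = "Poly_Mapping.keys a \<union> Poly_Mapping.keys b"
  have "mon (a + b) x = (\<Prod>i\<in>?S. x i ^ Poly_Mapping.lookup (a + b) i)"
    by (rule mon_superset) (auto simp: keys_add)
  also have "\<dots> = (\<Prod>i\<in>?S. x i ^ Poly_Mapping.lookup a i) * (\<Prod>i\<in>?S. x i ^ Poly_Mapping.lookup b i)"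
    by (simp add: lookup_add power_add prod.distrib)
  also have "\<dots> = mon a x * mon b x"
    by (simp add: mon_superset[symmetric])
  finally show ?thesis .
qed

lemma eval_superset:
  assumes "finite S" "Poly_Mapping.keys p \<subseteq> S"
  shows "mpoly_eval p x = (\<Sum>m\<in>S. Poly_Mapping.lookup p m * mon m x)"
  unfolding mpoly_eval_def mon_def[symmetric]
  by (rule sum.mono_neutral_left) (use assms in \<open>auto simp: in_keys_iff\<close>)

lemma eval_add: "mpoly_eval (p + q) x = mpoly_eval p x + mpoly_eval q x"
proof -
  let ?S = "Poly_Mapping.keys p \<union> Poly_Mapping.keys q"
  have "mpoly_eval (p + q) x = (\<Sum>m\<in>?S. Poly_Mapping.lookup (p + q) m * mon m x)"
    by (rule eval_superset) (auto simp: keys_add)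
  also have "\<dots> = (\<Sum>m\<in>?S. Poly_Mapping.lookup p m * mon m x) + (\<Sum>m\<in>?S. Poly_Mapping.lookup q m * mon m x)"
    by (simp add: lookup_add distrib_right sum.distrib)
  also have "\<dots> = mpoly_eval p x + mpoly_eval q x"
    by (simp add: eval_superset[symmetric])
  finally show ?thesis .
qed

lemma eval_zero [simp]: "mpoly_eval 0 x = 0"
  by (simp add: mpoly_eval_def)

lemma eval_single: "mpoly_eval (Poly_Mapping.single m c) x = c * mon m x"
  using eval_superset[of "{m}" "Poly_Mapping.single m c" x] by simp

lemma eval_neg: "mpoly_eval (- p) x = - mpoly_eval p x"
proof -
  have "mpoly_eval (p + - p) x = 0" by simp
  then show ?thesis unfolding eval_add by (simp add: add_eq_0_iff)
qed

lemma update_eq_add: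
  "a \<notin> Poly_Mapping.keys f \<Longrightarrow> Poly_Mapping.update a b f = f + Poly_Mapping.single a b"
  by (rule poly_mapping_eqI) (auto simp: lookup_update lookup_add lookup_single in_keys_iff when_def)

lemma eval_mult_single:
  "mpoly_eval (Poly_Mapping.single a b * q) x = b * mon a x * mpoly_eval (q :: 'a::comm_ring_1 mpoly) x"
proof (induction q rule: update_induct)
  case (update f c d)
  have "Poly_Mapping.single a b * Poly_Mapping.update c d f
      = Poly_Mapping.single a b * f + Poly_Mapping.single (a + c) (b * d)"
    using update(1) by (simp add: update_eq_add distrib_left mult_single)
  then show ?case using update(1,3)
    by (simp add: eval_add eval_single mon_add update_eq_add algebra_simps)
qed simp

lemma eval_mult: "mpoly_eval (p * q) x = mpoly_eval p x * mpoly_eval (q :: 'a::comm_ring_1 mpoly) x"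
proof (induction p rule: update_induct)
  case (update f c d)
  have "Poly_Mapping.update c d f * q = f * q + Poly_Mapping.single c d * q"
    using update(1) by (simp add: update_eq_add distrib_right)
  then have "mpoly_eval (Poly_Mapping.update c d f * q) x = mpoly_eval f x * mpoly_eval q x + d * mon c x * mpoly_eval q x"
    using update(3) by (simp only: eval_add eval_mult_single)
  moreover have "mpoly_eval (Poly_Mapping.update c d f) x = mpoly_eval f x + d * mon c x"
    by (simp only: update_eq_add[OF update(1)] eval_add eval_single)
  ultimately show ?case by (simp add: algebra_simps)
qed simp

lemma in_vars_add: "mpoly_in_vars n p \<Longrightarrow> mpoly_in_vars n q \<Longrightarrow> mpoly_in_vars n (p + q)"
  unfolding mpoly_in_vars_def using keys_add[of p q] by blast

lemma in_vars_neg: "mpoly_in_vars n p \<Longrightarrow> mpoly_in_vars n (- p)"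
proof -
  have "Poly_Mapping.keys (- p) = Poly_Mapping.keys p" by (simp add: in_keys_iff set_eq_iff)
  then show "mpoly_in_vars n p \<Longrightarrow> mpoly_in_vars n (- p)" unfolding mpoly_in_vars_def by simp
qed

lemma in_vars_mult:
  assumes p: "mpoly_in_vars n p" and q: "mpoly_in_vars n q"
  shows "mpoly_in_vars n (p * q)"
  unfolding mpoly_in_vars_def
proof (intro allI impI)
  fix mn assume "mn \<in> Poly_Mapping.keys (p * q)"
  then obtain a b where ab: "mn = a + b" "a \<in> Poly_Mapping.keys p" "b \<in> Poly_Mapping.keys q"
    using keys_mult[of p q] by blast
  have "Poly_Mapping.keys mn \<subseteq> Poly_Mapping.keys a \<union> Poly_Mapping.keys b"
    unfolding ab(1) by (rule keys_add)
  then show "Poly_Mapping.keys mn \<subseteq> {..<n}" using p q ab unfolding mpoly_in_vars_def by blast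
qed

definition poly_function :: "nat \<Rightarrow> ((nat \<Rightarrow> 'a::comm_ring_1) \<Rightarrow> 'a) \<Rightarrow> bool" where
  "poly_function n g \<longleftrightarrow> (\<exists>p. mpoly_in_vars n p \<and> (\<forall>x. g x = mpoly_eval p x))"

lemma poly_function_const: "poly_function n (\<lambda>x. c)"
  unfolding poly_function_def
  by (intro exI[of _ "Poly_Mapping.single 0 c"]) (auto simp: mpoly_in_vars_def eval_single mon_def)

lemma poly_function_var: "i < n \<Longrightarrow> poly_function n (\<lambda>x. x i)"
  unfolding poly_function_def
  by (intro exI[of _ "Poly_Mapping.single (Poly_Mapping.single i 1) 1"])
     (auto simp: mpoly_in_vars_def eval_single mon_def)

lemma poly_function_add: "poly_function n g \<Longrightarrow> poly_function n h \<Longrightarrow> poly_function n (\<lambda>x. g x + h x)"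
  unfolding poly_function_def using in_vars_add eval_add by metis

lemma poly_function_mult: "poly_function n g \<Longrightarrow> poly_function n h \<Longrightarrow> poly_function n (\<lambda>x. g x * h x)"
  unfolding poly_function_def using in_vars_mult eval_mult by metis

lemma poly_function_diff: "poly_function n g \<Longrightarrow> poly_function n h \<Longrightarrow> poly_function n (\<lambda>x. g x - h x)"
  unfolding poly_function_def using in_vars_add in_vars_neg eval_add eval_neg
  by (metis diff_conv_add_uminus)

lemma poly_function_power: "poly_function n g \<Longrightarrow> poly_function n (\<lambda>x. g x ^ k)"
  by (induction k) (simp_all add: poly_function_const poly_function_mult)

lemma poly_function_prod:
  "(\<And>i. i \<in> S \<Longrightarrow> poly_function n (g i)) \<Longrightarrow> poly_function n (\<lambda>x. \<Prod>i\<in>S. g i x)"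
  by (induction S rule: infinite_finite_induct) (simp_all add: poly_function_const poly_function_mult)

lemma eval_cong_mod:
  fixes e :: "'a::comm_ring_1"
  assumes p: "mpoly_in_vars n p" and xy: "\<forall>i<n. e * (x i - y i) = 0"
  shows "e * mpoly_eval p x = e * mpoly_eval p y"
proof -
  have "e * mon m x = e * mon m y" if m: "m \<in> Poly_Mapping.keys p" for m
    unfolding mon_def
  proof (rule prod_cong_mod)
    fix i assume "i \<in> Poly_Mapping.keys m"
    then have "i < n" using p m unfolding mpoly_in_vars_def by blast
    then have "e * x i = e * y i" using xy by (simp add: right_diff_distrib)
    then show "e * x i ^ Poly_Mapping.lookup m i = e * y i ^ Poly_Mapping.lookup m i"
      by (rule power_cong_mod)
  qed
  then have "e * (Poly_Mapping.lookup p m * mon m x) = e * (Poly_Mapping.lookup p m * mon m y)"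
    if "m \<in> Poly_Mapping.keys p" for m
    using that by (intro mult_cong_mod[OF refl])
  then show ?thesis unfolding mpoly_eval_def mon_def[symmetric] sum_distrib_left
    by (intro sum.cong) auto
qed

lemma polynomial_map_local:
  fixes f :: "(nat \<Rightarrow> 'a::comm_ring_1) \<Rightarrow> (nat \<Rightarrow> 'a)"
  assumes ps: "\<forall>j<m. mpoly_in_vars n (ps j)"
    and f: "\<forall>x\<in>vecs n. \<forall>j<m. f x j = mpoly_eval (ps j) x"
  shows "local_map n m f"
  unfolding local_map_def
proof (intro ballI allI impI)
  fix x y u j
  assume x: "x \<in> vecs n" and y: "y \<in> vecs n" and u: "\<forall>i<n. u * (x i - y i) = (0::'a)" and j: "j < m"
  have "u * mpoly_eval (ps j) x = u * mpoly_eval (ps j) y"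
    using ps j u by (intro eval_cong_mod) auto
  then show "u * (f x j - f y j) = 0" using f x y j by (simp add: right_diff_distrib)
qed

section \<open>Arithmetic consequences of the CFG condition\<close>

definition covered_by :: "'a::comm_ring_1 set \<Rightarrow> bool" where
  "covered_by F \<longleftrightarrow> (\<forall>z. \<exists>\<alpha>. (\<Sum>c\<in>F. \<alpha> c) = 1 \<and> (\<forall>c. \<alpha> c * (z - c) = 0))"

text \<open>A convex combination of elements of F yields such weights, by summing the
  coefficients attached to equal points.\<close>
lemma convex_comb_weights:
  fixes z :: "'a::comm_ring_1"
  assumes reg: "regular_ring TYPE('a)" and F: "finite F" and xs: "set xs \<subseteq> F"
    and cc: "convex_comb z xs as"
  shows "\<exists>\<alpha>. (\<Sum>c\<in>F. \<alpha> c) = 1 \<and> (\<forall>c. \<alpha> c * (z - c) = 0)"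
proof -
  let ?L = "length as"
  define \<alpha> where "\<alpha> c = (\<Sum>i\<in>{i. i \<in> {..<?L} \<and> xs ! i = c}. as ! i)" for c
  have len: "length xs = ?L" using cc unfolding convex_comb_def by simp
  have "(\<Sum>c\<in>F. \<alpha> c) = (\<Sum>i\<in>{..<?L}. as ! i)"
    unfolding \<alpha>_def by (rule sum.group) (use F xs len in auto)
  also have "\<dots> = sum_list as" by (simp add: sum_list_sum_nth atLeast0LessThan)
  also have "\<dots> = 1" using cc unfolding convex_comb_def coeff_family_def by simp
  finally have sum1: "(\<Sum>c\<in>F. \<alpha> c) = 1" .
  have "\<alpha> c * (z - c) = 0" for c
  proof -
    have "\<alpha> c * (z - c) = (\<Sum>i\<in>{i. i \<in> {..<?L} \<and> xs ! i = c}. as ! i * (z - xs ! i))"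
      unfolding \<alpha>_def sum_distrib_right by (intro sum.cong) auto
    also have "\<dots> = 0"
    proof (intro sum.neutral ballI)
      fix i assume "i \<in> {i. i \<in> {..<?L} \<and> xs ! i = c}"
      then have "as ! i * eid (z - xs ! i) = 0" using cc unfolding convex_comb_def by auto
      then show "as ! i * (z - xs ! i) = 0" using eid_annihilator[OF reg] by blast
    qed
    finally show ?thesis .
  qed
  then show ?thesis using sum1 by blast
qed

lemma CFG_ring_regular: "CFG_ring TYPE('a::comm_ring_1) \<Longrightarrow> regular_ring TYPE('a)"
  unfolding CFG_ring_def by (rule conjunct1)

lemma CFG_ring_covered:
  assumes "CFG_ring TYPE('a::comm_ring_1)"
  shows "\<exists>F::'a set. finite F \<and> covered_by F"
proof -
  have reg: "regular_ring TYPE('a)" by (rule CFG_ring_regular[OF assms])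
  obtain F :: "'a set" where F: "finite F"
    and cover: "\<forall>x. \<exists>xs as. set xs \<subseteq> F \<and> convex_comb x xs as"
    using assms unfolding CFG_ring_def by blast
  have "covered_by F" unfolding covered_by_def using convex_comb_weights[OF reg F] cover by metis
  then show ?thesis using F by blast
qed

text \<open>Covering extends to vectors: multiplying coordinatewise weights gives weights
  indexed by the grid F^k.\<close>
lemma covered_by_vectors:
  fixes z :: "nat \<Rightarrow> 'a::comm_ring_1"
  assumes F: "finite F" and cover: "covered_by F"
  shows "\<exists>\<beta>. (\<Sum>v\<in>PiE {..<k} (\<lambda>_. F). \<beta> v) = 1 \<and>
              (\<forall>v\<in>PiE {..<k} (\<lambda>_. F). \<forall>j<k. \<beta> v * (z j - v j) = 0)"
proof -
  have "\<forall>j. \<exists>a. (\<Sum>c\<in>F. a c) = 1 \<and> (\<forall>c. a c * (z j - c) = 0)"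
    using cover unfolding covered_by_def by blast
  then obtain \<alpha> where \<alpha>: "\<And>j. (\<Sum>c\<in>F. \<alpha> j c) = 1" "\<And>j c. \<alpha> j c * (z j - c) = 0"
    by metis
  define \<beta> where "\<beta> v = (\<Prod>j\<in>{..<k}. \<alpha> j (v j))" for v
  have "(\<Sum>v\<in>PiE {..<k} (\<lambda>_. F). \<beta> v) = (\<Prod>j\<in>{..<k}. \<Sum>c\<in>F. \<alpha> j c)"
    unfolding \<beta>_def by (rule prod_sum_PiE[symmetric]) (use F in auto)
  also have "\<dots> = 1" using \<alpha>(1) by simp
  finally have sum1: "(\<Sum>v\<in>PiE {..<k} (\<lambda>_. F). \<beta> v) = 1" .
  have "\<beta> v * (z j - v j) = 0" if "j < k" for v j
  proof -
    have "\<beta> v = \<alpha> j (v j) * (\<Prod>i\<in>{..<k} - {j}. \<alpha> i (v i))"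
      unfolding \<beta>_def using that by (simp add: prod.remove)
    then show ?thesis using annihilator_mult(3)[OF \<alpha>(2)[of j "v j"]] by (simp only:)
  qed
  then show ?thesis using sum1 by blast
qed

lemma periodic_power_idem:
  fixes e y :: "'a::comm_ring_1"
  assumes period: "e * y ^ (a + p) = e * y ^ a" and "a \<le> N" and "p dvd N"
  shows "e * (y ^ N * y ^ N) = e * y ^ N"
proof -
  have per: "e * y ^ (a + p * t) = e * y ^ a" for t
  proof (induction t)
    case (Suc t)
    have "e * y ^ (a + p * Suc t) = (e * y ^ (a + p)) * y ^ (p * t)"
      by (simp add: power_add mult.assoc)
    also have "\<dots> = e * y ^ (a + p * t)" using period by (simp add: power_add mult.assoc)
    finally show ?case using Suc by simp
  qed simp
  obtain t where t: "N = p * t" using \<open>p dvd N\<close> by blast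
  have "e * (y ^ N * y ^ N) = e * y ^ (a + p * t) * y ^ (N - a)"
    using \<open>a \<le> N\<close> t by (simp add: power_add[symmetric] mult.assoc)
  also have "\<dots> = e * y ^ a * y ^ (N - a)" using per by simp
  also have "\<dots> = e * y ^ N" using \<open>a \<le> N\<close> by (simp add: power_add[symmetric] mult.assoc)
  finally show ?thesis .
qed

text \<open>For a finite cover F, every y^N with N = (card F)! is idempotent: on each piece of
  the partition indexed by the grid F^(card F + 1), two of y, y^2, ..., y^(card F + 1)
  coincide by the pigeonhole principle.\<close>
lemma power_fact_idem:
  fixes y :: "'a::comm_ring_1" and F :: "'a set"
  assumes F: "finite F" and cover: "covered_by F"
  shows "y ^ fact (card F) * y ^ fact (card F) = y ^ fact (card F)"
proof -
  define T where "T = card F"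
  define N :: nat where "N = fact T"
  let ?P = "PiE {..<Suc T} (\<lambda>_. F)"
  obtain \<beta> where sum1: "(\<Sum>v\<in>?P. \<beta> v) = 1"
    and \<beta>: "\<And>v j. v \<in> ?P \<Longrightarrow> j < Suc T \<Longrightarrow> \<beta> v * (y ^ Suc j - v j) = 0"
    using covered_by_vectors[OF F cover, where z="\<lambda>j. y ^ Suc j" and k="Suc T"] by blast
  have piece: "\<beta> v * (y ^ N * y ^ N) = \<beta> v * y ^ N" if v: "v \<in> ?P" for v
  proof -
    have "\<not> inj_on v {..<Suc T}"
    proof
      assume "inj_on v {..<Suc T}"
      moreover have "v ` {..<Suc T} \<subseteq> F" using v by auto
      ultimately have "card {..<Suc T} \<le> card F" using F by (rule card_inj_on_le)
      then show False unfolding T_def by simp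
    qed
    then obtain j l where jl: "j < l" "l < Suc T" "v j = v l"
      unfolding inj_on_def by (metis lessThan_iff linorder_neqE_nat)
    have "\<beta> v * y ^ Suc j = \<beta> v * v j" "\<beta> v * y ^ Suc l = \<beta> v * v l"
      using \<beta>[OF v, of j] \<beta>[OF v, of l] jl by (simp_all add: right_diff_distrib)
    then have "\<beta> v * y ^ (Suc j + (l - j)) = \<beta> v * y ^ Suc j" using jl by simp
    moreover have "Suc j \<le> N" unfolding N_def using jl fact_ge_self[of T] by linarith
    moreover have "l - j dvd N" unfolding N_def by (rule dvd_fact) (use jl in auto)
    ultimately show ?thesis by (rule periodic_power_idem)
  qed
  have "y ^ N * y ^ N = (\<Sum>v\<in>?P. \<beta> v * (y ^ N * y ^ N))" using sum1 by (simp add: sum_distrib_right[symmetric])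
  also have "\<dots> = (\<Sum>v\<in>?P. \<beta> v * y ^ N)" using piece by simp
  also have "\<dots> = y ^ N" using sum1 by (simp add: sum_distrib_right[symmetric])
  finally show ?thesis unfolding N_def T_def .
qed

lemma regular_power_divides:
  fixes y :: "'a::comm_ring_1"
  assumes reg: "regular_ring TYPE('a)"
  shows "\<exists>w. y = y ^ Suc k * w"
proof -
  obtain w where w: "y * w * y = y" using reg unfolding regular_ring_def by blast
  have "y = y ^ Suc k * w ^ k"
  proof (induction k)
    case (Suc k)
    have "y ^ Suc (Suc k) * w ^ Suc k = (y ^ Suc k * w ^ k) * (y * w)" by (simp add: ac_simps)
    also have "\<dots> = y * w * y" using Suc[symmetric] by (simp add: ac_simps)
    finally show ?case using w by simp
  qed simp
  then show ?thesis by blast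
qed

lemma one_minus_power_annihilates:
  fixes y :: "'a::comm_ring_1"
  assumes reg: "regular_ring TYPE('a)" and idem: "y ^ N * y ^ N = y ^ N"
  shows "(1 - y ^ N) * y = 0"
proof -
  obtain w where w: "y = y ^ Suc N * w" using regular_power_divides[OF reg] by blast
  have "(1 - y ^ N) * y = (1 - y ^ N) * (y ^ N * (y * w))" using w by (simp add: ac_simps)
  also have "\<dots> = (y ^ N - y ^ N * y ^ N) * (y * w)" by (simp add: algebra_simps)
  also have "\<dots> = 0" using idem by simp
  finally show ?thesis .
qed

section \<open>Boolean interpolation\<close>

primrec interp :: "('v \<Rightarrow> 'x \<Rightarrow> 'a::comm_ring_1) \<Rightarrow> ('v \<Rightarrow> 'a) \<Rightarrow> 'v list \<Rightarrow> 'x \<Rightarrow> 'a" where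
  "interp D K [] x = 0"
| "interp D K (c # cs) x = D c x * K c + (1 - D c x) * interp D K cs x"

lemma interp_eq:
  "(\<forall>c\<in>set cs. D c x * (y - K c) = 0) \<Longrightarrow>
     prod_list (map (\<lambda>c. 1 - D c x) cs) * y + interp D K cs x = y"
proof (induction cs)
  case (Cons c cs)
  then have ih: "interp D K cs x = y - prod_list (map (\<lambda>c. 1 - D c x) cs) * y"
    and d: "D c x * (y - K c) = 0" by (auto simp: eq_diff_eq add.commute)
  have "prod_list (map (\<lambda>c. 1 - D c x) (c # cs)) * y + interp D K (c # cs) x
        = y - D c x * (y - K c)"
    by (simp add: ih algebra_simps)
  then show ?case using d by simp
qed simp

lemma interp_poly:
  assumes "\<And>c. poly_function n (D c)"
  shows "poly_function n (interp D K cs)"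
proof (induction cs)
  case Nil
  have "interp D K [] = (\<lambda>x. 0)" by (rule ext) simp
  then show ?case by (simp add: poly_function_const)
next
  case (Cons c cs)
  have "interp D K (c # cs) = (\<lambda>x. D c x * K c + (1 - D c x) * interp D K cs x)" by (rule ext) simp
  moreover have "poly_function n (\<lambda>x. D c x * K c)"
    by (rule poly_function_mult[OF assms poly_function_const])
  moreover have "poly_function n (\<lambda>x. (1 - D c x) * interp D K cs x)"
    by (rule poly_function_mult[OF poly_function_diff[OF poly_function_const assms] Cons])
  ultimately show ?case by (simp add: poly_function_add)
qed

text \<open>delta_c(x) = prod_{i<n} (1 - (x_i - c_i)^N) acts as the indicator of "x = c":
  it is polynomial, annihilates x - c once every y^N is idempotent, and equals 1 on every
  piece where x = c.\<close>
definition point_indicator :: "nat \<Rightarrow> nat \<Rightarrow> (nat \<Rightarrow> 'a::comm_ring_1) \<Rightarrow> (nat \<Rightarrow> 'a) \<Rightarrow> 'a" where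
  "point_indicator N n c x = (\<Prod>i<n. 1 - (x i - c i) ^ N)"

lemma point_indicator_poly: "poly_function n (point_indicator N n c)"
  unfolding point_indicator_def
  by (intro poly_function_prod poly_function_diff poly_function_const poly_function_power
      poly_function_var) auto

lemma point_indicator_annihilates:
  fixes c x :: "nat \<Rightarrow> 'a::comm_ring_1"
  assumes reg: "regular_ring TYPE('a)" and idem: "\<And>y::'a. y ^ N * y ^ N = y ^ N" and i: "i < n"
  shows "point_indicator N n c x * (x i - c i) = 0"
proof -
  have "point_indicator N n c x = (1 - (x i - c i) ^ N) * (\<Prod>i'\<in>{..<n} - {i}. 1 - (x i' - c i') ^ N)"
    unfolding point_indicator_def using i by (simp add: prod.remove)
  then show ?thesis
    using annihilator_mult(3)[OF one_minus_power_annihilates[OF reg idem]] by (simp only:)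
qed

lemma point_indicator_on_piece:
  fixes e :: "'a::comm_ring_1"
  assumes e: "\<forall>i<n. e * (x i - c i) = 0" and N: "N \<ge> 1"
  shows "e * point_indicator N n c x = e"
proof -
  have "e * point_indicator N n c x = e * (\<Prod>i<n. 1)" unfolding point_indicator_def
  proof (rule prod_cong_mod)
    fix i assume "i \<in> {..<n}"
    then have "e * (x i - c i) ^ N = 0"
      using e N power_cong_mod[of e "x i - c i" 0 N] by (simp add: power_0_left)
    then show "e * (1 - (x i - c i) ^ N) = e * 1" by (simp add: right_diff_distrib)
  qed
  then show ?thesis by simp
qed

text \<open>If the nodes C meet every point of the grid F^n, where F covers the ring, then
  the complementary idempotents 1 - delta_c(x) have product zero: on each piece of the
  partition of unity for x one of the delta_c(x) equals 1.\<close>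
lemma point_indicators_cover:
  fixes x :: "nat \<Rightarrow> 'a::comm_ring_1"
  assumes F: "finite F" and cover: "covered_by F" and N: "N \<ge> 1" and C: "finite C"
    and nodes: "\<And>v. v \<in> PiE {..<n} (\<lambda>_. F) \<Longrightarrow> \<exists>c\<in>C. \<forall>i<n. c i = v i"
  shows "(\<Prod>c\<in>C. 1 - point_indicator N n c x) = 0"
proof -
  let ?P = "PiE {..<n} (\<lambda>_. F)" and ?Q = "\<Prod>c\<in>C. 1 - point_indicator N n c x"
  obtain \<beta> where sum1: "(\<Sum>v\<in>?P. \<beta> v) = 1"
    and \<beta>: "\<And>v i. v \<in> ?P \<Longrightarrow> i < n \<Longrightarrow> \<beta> v * (x i - v i) = 0"
    using covered_by_vectors[OF F cover, where z=x and k=n] by blast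
  have piece: "\<beta> v * ?Q = 0" if v: "v \<in> ?P" for v
  proof -
    obtain c where c: "c \<in> C" "\<forall>i<n. c i = v i" using nodes[OF v] by blast
    have "\<beta> v * point_indicator N n c x = \<beta> v"
      by (rule point_indicator_on_piece[OF _ N]) (use \<beta>[OF v] c in simp)
    then have "\<beta> v * (1 - point_indicator N n c x) = 0" by (simp add: right_diff_distrib)
    moreover have "?Q = (1 - point_indicator N n c x) * (\<Prod>c'\<in>C - {c}. 1 - point_indicator N n c' x)"
      using c(1) C by (simp add: prod.remove)
    ultimately show ?thesis using annihilator_mult(1) by simp
  qed
  have "?Q = (\<Sum>v\<in>?P. \<beta> v * ?Q)" using sum1 by (simp add: sum_distrib_right[symmetric])
  also have "\<dots> = 0" using piece by simp
  finally show ?thesis .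
qed

lemma grid_nodes:
  assumes F: "finite (F :: 'a::comm_ring_1 set)"
  obtains cs where "distinct cs" "set cs \<subseteq> vecs n"
    "\<And>v. v \<in> PiE {..<n} (\<lambda>_. F) \<Longrightarrow> \<exists>c\<in>set cs. \<forall>i<n. c i = v i"
proof -
  define C where "C = (\<lambda>v i. if i < n then v i else (0::'a)) ` PiE {..<n} (\<lambda>_. F)"
  have "finite C" unfolding C_def using F by (intro finite_imageI finite_PiE) auto
  then obtain cs where cs: "set cs = C" "distinct cs" using finite_distinct_list by blast
  have "set cs \<subseteq> vecs n"
  proof
    fix c assume "c \<in> set cs"
    then obtain v where "c = (\<lambda>i. if i < n then v i else 0)" unfolding cs(1) C_def by blast
    then show "c \<in> vecs n" unfolding vecs_def by simp
  qed
  moreover have "\<exists>c\<in>set cs. \<forall>i<n. c i = v i" if "v \<in> PiE {..<n} (\<lambda>_. F)" for v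
  proof (rule bexI)
    show "(\<lambda>i. if i < n then v i else 0) \<in> set cs" unfolding cs(1) C_def using that by (rule imageI)
  qed simp
  ultimately show ?thesis using cs(2) that by blast
qed

text \<open>A local map agrees on A^n with the Boolean interpolation of its values at the grid
  nodes: delta_c(x) identifies f x with f c, and the residual piece is empty.\<close>
lemma local_map_eq_interp:
  fixes f :: "(nat \<Rightarrow> 'a::comm_ring_1) \<Rightarrow> (nat \<Rightarrow> 'a)"
  assumes reg: "regular_ring TYPE('a)" and loc: "local_map n m f"
    and F: "finite F" and cover: "covered_by F"
    and N: "N \<ge> 1" and idem: "\<And>y::'a. y ^ N * y ^ N = y ^ N"
    and cs: "distinct cs" "set cs \<subseteq> vecs n"
    and nodes: "\<And>v. v \<in> PiE {..<n} (\<lambda>_. F) \<Longrightarrow> \<exists>c\<in>set cs. \<forall>i<n. c i = v i"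
    and x: "x \<in> vecs n" and j: "j < m"
  shows "f x j = interp (point_indicator N n) (\<lambda>c. f c j) cs x"
proof -
  let ?\<delta> = "point_indicator N n"
  have "?\<delta> c x * (f x j - f c j) = 0" if "c \<in> set cs" for c
  proof (rule local_mapD[OF loc x _ _ j])
    show "c \<in> vecs n" using cs(2) that by (rule subsetD)
    show "?\<delta> c x * (x i - c i) = 0" if "i < n" for i
      using that by (rule point_indicator_annihilates[OF reg idem])
  qed
  then have "prod_list (map (\<lambda>c. 1 - ?\<delta> c x) cs) * f x j + interp ?\<delta> (\<lambda>c. f c j) cs x = f x j"
    by (intro interp_eq[of cs ?\<delta> x]) blast
  moreover have "prod_list (map (\<lambda>c. 1 - ?\<delta> c x) cs) = (\<Prod>c\<in>set cs. 1 - ?\<delta> c x)"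
    by (rule prod.distinct_set_conv_list[OF cs(1), symmetric])
  moreover have "(\<Prod>c\<in>set cs. 1 - ?\<delta> c x) = 0"
    by (rule point_indicators_cover[OF F cover N finite_set nodes])
  ultimately show ?thesis by simp
qed

lemma local_map_polynomial:
  fixes f :: "(nat \<Rightarrow> 'a::comm_ring_1) \<Rightarrow> (nat \<Rightarrow> 'a)"
  assumes cfg: "CFG_ring TYPE('a)" and loc: "local_map n m f"
  shows "\<exists>ps :: nat \<Rightarrow> 'a mpoly. (\<forall>j<m. mpoly_in_vars n (ps j))
        \<and> (\<forall>x\<in>vecs n. \<forall>j<m. f x j = mpoly_eval (ps j) x)"
proof -
  obtain F :: "'a set" where F: "finite F" and cover: "covered_by F"
    using CFG_ring_covered[OF cfg] by blast
  define N :: nat where "N = fact (card F)"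
  have N: "N \<ge> 1" unfolding N_def by simp
  have idem: "\<And>y::'a. y ^ N * y ^ N = y ^ N" unfolding N_def by (rule power_fact_idem[OF F cover])
  obtain cs where cs: "distinct cs" "set cs \<subseteq> vecs n"
    and nodes: "\<And>v. v \<in> PiE {..<n} (\<lambda>_. F) \<Longrightarrow> \<exists>c\<in>set cs. \<forall>i<n. c i = v i"
    using grid_nodes[OF F] by metis
  define g where "g j = interp (point_indicator N n) (\<lambda>c. f c j) cs" for j
  have "poly_function n (g j)" for j
    unfolding g_def by (rule interp_poly) (rule point_indicator_poly)
  then have "\<forall>j. \<exists>p. mpoly_in_vars n p \<and> (\<forall>x. g j x = mpoly_eval p x)"
    unfolding poly_function_def by blast
  from choice[OF this] obtain ps where ps: "\<forall>j. mpoly_in_vars n (ps j) \<and> (\<forall>x. g j x = mpoly_eval (ps j) x)"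
    by blast
  have "f x j = mpoly_eval (ps j) x" if "x \<in> vecs n" "j < m" for x j
    using local_map_eq_interp[OF CFG_ring_regular[OF cfg] loc F cover N idem cs nodes that] ps
    unfolding g_def by simp
  then show ?thesis using ps by blast
qed

theorem mainTheorem2:
  fixes f :: "(nat \<Rightarrow> 'a::comm_ring_1) \<Rightarrow> (nat \<Rightarrow> 'a)" and n m :: nat
  assumes "CFG_ring TYPE('a)"
    and "n \<ge> 1" and "m \<ge> 1"
    and "\<forall>x\<in>vecs n. f x \<in> vecs m"
  shows "contractive n m f \<longleftrightarrow>
    (\<exists>ps :: nat \<Rightarrow> 'a mpoly. (\<forall>j<m. mpoly_in_vars n (ps j))
        \<and> (\<forall>x\<in>vecs n. \<forall>j<m. f x j = mpoly_eval (ps j) x))"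
proof -
  have reg: "regular_ring TYPE('a)" by (rule CFG_ring_regular[OF assms(1)])
  show ?thesis
  proof
    assume "contractive n m f"
    then have "local_map n m f" using contractive_iff_local[OF reg] by blast
    then show "\<exists>ps. (\<forall>j<m. mpoly_in_vars n (ps j)) \<and> (\<forall>x\<in>vecs n. \<forall>j<m. f x j = mpoly_eval (ps j) x)"
      by (rule local_map_polynomial[OF assms(1)])
  next
    assume "\<exists>ps. (\<forall>j<m. mpoly_in_vars n (ps j)) \<and> (\<forall>x\<in>vecs n. \<forall>j<m. f x j = mpoly_eval (ps j) x)"
    then have "local_map n m f" using polynomial_map_local by blast
    then show "contractive n m f" using contractive_iff_local[OF reg] by blast
  qed
qed

end
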